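(* For any finite family $\mathcal{F}\subset\mathbb{R}^{n\times n}$ and any $\epsilon,\delta\in(0,1)$, there is a randomized algorithm that, for every unknown $\mathbf{A}\in\mathbb{R}^{n\times n}$, uses $O(\log(|\mathcal{F}|/\delta)/\epsilon^2)$ one-sided matvec queries of the form $\mathbf{x}\mapsto\mathbf{A}\mathbf{x}$ (and no queries with $\mathbf{A}^\mathsf{T}$) and with probability greater than $1-\delta$ returns $\tilde{\mathbf{B}}\in\mathcal{F}$ with $\|\mathbf{A}-\tilde{\mathbf{B}}\|_\mathsf{F}\le(1+\epsilon)\min_{\mathbf{B}\in\mathcal{F}}\|\mathbf{A}-\mathbf{B}\|_\mathsf{F}$.
   Context: One-sided matvec model: the algorithm knows $\mathcal{F}$ but accesses the unknown matrix $\mathbf{A}$ only via products $\mathbf{x}\mapsto\mathbf{A}\mathbf{x}$ for vectors of its choice. $\|\cdot\|_\mathsf{F}$ is the Frobenius norm. *)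

theory Defs
  imports "HOL-Probability.Probability_Measure" "Jordan_Normal_Form.Matrix"
begin

text \<open>A randomized adaptive one-sided matvec
algorithm consists of a query rule Q (next query vector from the seed and previous answers)
and an output rule (matrix from seed and all answers).\<close>

type_synonym seed = "nat \<Rightarrow> real"

fun answers :: "(seed \<Rightarrow> real vec list \<Rightarrow> real vec) \<Rightarrow> real mat \<Rightarrow> seed \<Rightarrow> nat \<Rightarrow> real vec list" where
  "answers Q A \<omega> 0 = []"
| "answers Q A \<omega> (Suc k) = (let as = answers Q A \<omega> k in as @ [mult_mat_vec A (Q \<omega> as)])"

definition frob_norm :: "real mat \<Rightarrow> real" where
  "frob_norm A = sqrt (\<Sum>i<dim_row A. \<Sum>j<dim_col A. (A $$ (i,j))\<^sup>2)"

end

theory Submission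
  imports Defs "HOL-Probability.Product_PMF"
begin

text \<open>The algorithm queries \<open>A\<close> non-adaptively with \<open>g \<cdot> m\<close> random sign vectors \<open>x\<close>, in \<open>g\<close>
  groups of \<open>m\<close>. Since \<open>A x - B x = (A - B) x\<close>, each group gives, for every candidate \<open>B\<close>,
  Hutchinson's estimate \<open>(1/m) \<Sum>\<^sub>l \<parallel>(A - B) x\<^sub>l\<parallel>\<^sup>2\<close> of \<open>\<parallel>A - B\<parallel>\<^sub>F\<^sup>2\<close>. A Rademacher quadratic
  form \<open>z\<^sup>T G z\<close> has variance at most \<open>2 \<parallel>G\<parallel>\<^sub>F\<^sup>2\<close>, so by Chebyshev the estimate is within a
  factor \<open>1 \<plusminus> \<epsilon>/2\<close> with probability at least \<open>15/16\<close> once \<open>m \<ge> 128/\<epsilon>\<^sup>2\<close>. The median over the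
  groups is then wrong with probability at most \<open>2\<^sup>-\<^sup>g\<close>, and with \<open>g \<approx> 2 ln (|F|/\<delta>)\<close> a union bound
  makes all medians accurate with probability \<open>> 1 - \<delta>\<close>. The candidate with the least median is
  then \<open>(1 + \<epsilon>)\<close>-optimal because \<open>(1 + \<epsilon>/2) / (1 - \<epsilon>/2) \<le> (1 + \<epsilon>)\<^sup>2\<close>. A single candidate needs
  no queries, which matters because \<open>ln (1/\<delta>)\<close> may be arbitrarily small.\<close>

definition rademacher :: "real pmf" where
  "rademacher = pmf_of_set {-1, 1}"

definition rademacher_vec :: "'a set \<Rightarrow> ('a \<Rightarrow> real) pmf" where
  "rademacher_vec T = Pi_pmf T 0 (\<lambda>_. rademacher)"

lemma set_pmf_rademacher: "set_pmf rademacher = {-1, 1}"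
  unfolding rademacher_def by (subst set_pmf_of_set) auto

lemma pmf_rademacher_uminus: "pmf rademacher (- y) = pmf rademacher y"
  unfolding rademacher_def by (subst (1 2) pmf_of_set) (auto simp: indicator_def)

lemma set_pmf_rademacher_vec:
  "finite T \<Longrightarrow> set_pmf (rademacher_vec T) = PiE_dflt T 0 (\<lambda>_. {-1, 1})"
  by (simp add: rademacher_vec_def set_Pi_pmf o_def set_pmf_rademacher)

lemma rademacher_vec_square:
  assumes "finite T" "z \<in> set_pmf (rademacher_vec T)" "s \<in> T"
  shows "z s * z s = 1"
  using assms by (auto simp: set_pmf_rademacher_vec PiE_dflt_def)

lemma integrable_rademacher_vec:
  "finite T \<Longrightarrow> integrable (measure_pmf (rademacher_vec T)) (f :: _ \<Rightarrow> real)"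
  by (simp add: integrable_measure_pmf_finite set_pmf_rademacher_vec finite_PiE_dflt)

definition flip_sign :: "'a \<Rightarrow> ('a \<Rightarrow> real) \<Rightarrow> 'a \<Rightarrow> real" where
  "flip_sign a z = z(a := - z a)"

lemma flip_sign_flip_sign [simp]: "flip_sign a (flip_sign a z) = z"
  by (auto simp: flip_sign_def fun_eq_iff)

lemma map_pmf_flip_sign_rademacher_vec:
  assumes T: "finite T" and a: "a \<in> T"
  shows "map_pmf (flip_sign a) (rademacher_vec T) = rademacher_vec T"
proof (rule pmf_eqI)
  fix z
  have inj: "inj (flip_sign a)"
    by (metis flip_sign_flip_sign injI)
  have "pmf (map_pmf (flip_sign a) (rademacher_vec T)) z
        = pmf (map_pmf (flip_sign a) (rademacher_vec T)) (flip_sign a (flip_sign a z))"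
    by simp
  also have "\<dots> = pmf (rademacher_vec T) (flip_sign a z)"
    by (rule pmf_map_inj'[OF inj])
  also have "\<dots> = pmf (rademacher_vec T) z"
  proof -
    have outside: "(\<forall>x. x \<notin> T \<longrightarrow> flip_sign a z x = 0) = (\<forall>x. x \<notin> T \<longrightarrow> z x = 0)"
      using a by (auto simp: flip_sign_def)
    have "(\<Prod>x\<in>T. pmf rademacher (flip_sign a z x)) = (\<Prod>x\<in>T. pmf rademacher (z x))"
      by (rule prod.cong) (auto simp: flip_sign_def pmf_rademacher_uminus)
    then show ?thesis
      unfolding rademacher_vec_def by (simp only: pmf_Pi[OF T] outside)
  qed
  finally show "pmf (map_pmf (flip_sign a) (rademacher_vec T)) z = pmf (rademacher_vec T) z" .
qed

lemma expectation_rademacher_vec_odd: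
  fixes h :: "('a \<Rightarrow> real) \<Rightarrow> real"
  assumes "finite T" "a \<in> T" and odd: "\<And>z. h (flip_sign a z) = - h z"
  shows "measure_pmf.expectation (rademacher_vec T) h = 0"
proof -
  have "measure_pmf.expectation (rademacher_vec T) h
        = measure_pmf.expectation (map_pmf (flip_sign a) (rademacher_vec T)) h"
    by (simp add: map_pmf_flip_sign_rademacher_vec assms)
  also have "\<dots> = - measure_pmf.expectation (rademacher_vec T) h"
    by (simp add: odd)
  finally show ?thesis by simp
qed

lemma expectation_rademacher_vec_prod4:
  assumes T: "finite T" and in_T: "s \<in> T" "t \<in> T" "u \<in> T" "v \<in> T"
    and "s \<noteq> t" "u \<noteq> v"
  shows "measure_pmf.expectation (rademacher_vec T) (\<lambda>z. z s * z t * z u * z v) =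
         (if (s = u \<and> t = v) \<or> (s = v \<and> t = u) then 1 else 0)"
proof (cases "(s = u \<and> t = v) \<or> (s = v \<and> t = u)")
  case True
  have "AE z in measure_pmf (rademacher_vec T). z s * z t * z u * z v = 1"
  proof (rule AE_pmfI)
    fix z assume z: "z \<in> set_pmf (rademacher_vec T)"
    have "z s * z s = 1" "z t * z t = 1"
      using rademacher_vec_square[OF T z] in_T by auto
    with True show "z s * z t * z u * z v = 1"
      by (auto simp: algebra_simps)
  qed
  then have "measure_pmf.expectation (rademacher_vec T) (\<lambda>z. z s * z t * z u * z v)
             = measure_pmf.expectation (rademacher_vec T) (\<lambda>z. 1)"
    by (intro integral_cong_AE) simp_all
  with True show ?thesis by simp
next
  case False
  \<comment> \<open>some index occurs exactly once, so flipping its sign negates the product\<close>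
  then obtain a where a: "a \<in> {s, t}" "a \<noteq> u" "a \<noteq> v"
    using \<open>s \<noteq> t\<close> by auto
  have "measure_pmf.expectation (rademacher_vec T) (\<lambda>z. z s * z t * z u * z v) = 0"
    using a \<open>s \<noteq> t\<close> in_T
    by (intro expectation_rademacher_vec_odd[OF T, of a]) (auto simp: flip_sign_def)
  with False show ?thesis by simp
qed

definition off_diagonal :: "'a set \<Rightarrow> ('a \<times> 'a) set" where
  "off_diagonal T = Sigma T (\<lambda>s. T - {s})"

lemma finite_off_diagonal: "finite T \<Longrightarrow> finite (off_diagonal T)"
  by (simp add: off_diagonal_def)

lemma sum_off_diagonal:
  "finite T \<Longrightarrow> (\<Sum>p\<in>off_diagonal T. f p) = (\<Sum>s\<in>T. \<Sum>t\<in>T - {s}. f (s, t))"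
  unfolding off_diagonal_def by (subst sum.Sigma) auto

lemma rademacher_quadratic_form_off_diagonal:
  assumes T: "finite T" and z: "z \<in> set_pmf (rademacher_vec T)"
  shows "(\<Sum>s\<in>T. \<Sum>t\<in>T. G s t * z s * z t) - (\<Sum>s\<in>T. G s s)
         = (\<Sum>p\<in>off_diagonal T. G (fst p) (snd p) * (z (fst p) * z (snd p)))"
proof -
  have "(\<Sum>t\<in>T. G s t * z s * z t) = G s s + (\<Sum>t\<in>T - {s}. G s t * (z s * z t))"
    if s: "s \<in> T" for s
  proof -
    have "(\<Sum>t\<in>T. G s t * z s * z t) = G s s * (z s * z s) + (\<Sum>t\<in>T - {s}. G s t * z s * z t)"
      using T s by (subst sum.remove) (auto simp: mult.assoc)
    then show ?thesis
      using rademacher_vec_square[OF T z s] by (simp add: mult.assoc)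
  qed
  then show ?thesis
    using T by (simp add: sum.distrib sum_off_diagonal)
qed

lemma expectation_rademacher_off_diagonal_square:
  fixes c :: "'a \<times> 'a \<Rightarrow> real"
  assumes T: "finite T" and sym: "\<And>p. c (prod.swap p) = c p"
  shows "measure_pmf.expectation (rademacher_vec T)
           (\<lambda>z. (\<Sum>p\<in>off_diagonal T. c p * (z (fst p) * z (snd p)))\<^sup>2)
         = 2 * (\<Sum>p\<in>off_diagonal T. (c p)\<^sup>2)"
proof -
  let ?PP = "off_diagonal T"
  let ?E = "measure_pmf.expectation (rademacher_vec T)"
  define w :: "'a \<times> 'a \<Rightarrow> ('a \<Rightarrow> real) \<Rightarrow> real" where "w p z = z (fst p) * z (snd p)" for p z
  have PP: "finite ?PP" using T by (rule finite_off_diagonal)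
  have swap: "prod.swap p \<noteq> p" "prod.swap p \<in> ?PP" if "p \<in> ?PP" for p
    using that by (auto simp: off_diagonal_def)
  have Eww: "?E (\<lambda>z. w p z * w p' z) = (if p' \<in> {p, prod.swap p} then 1 else 0)"
    if "p \<in> ?PP" "p' \<in> ?PP" for p p'
    using that expectation_rademacher_vec_prod4[OF T, of "fst p" "snd p" "fst p'" "snd p'"]
    by (cases p; cases p') (auto simp: off_diagonal_def w_def mult.assoc)
  have "?E (\<lambda>z. (\<Sum>p\<in>?PP. c p * w p z)\<^sup>2)
        = ?E (\<lambda>z. \<Sum>p\<in>?PP. \<Sum>p'\<in>?PP. c p * c p' * (w p z * w p' z))"
    unfolding power2_eq_square sum_product by (simp add: algebra_simps)
  also have "\<dots> = (\<Sum>p\<in>?PP. \<Sum>p'\<in>?PP. c p * c p' * ?E (\<lambda>z. w p z * w p' z))"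
    by (simp add: Bochner_Integration.integral_sum integrable_rademacher_vec[OF T])
  also have "\<dots> = (\<Sum>p\<in>?PP. 2 * (c p)\<^sup>2)"
  proof (rule sum.cong[OF refl])
    fix p assume p: "p \<in> ?PP"
    have "(\<Sum>p'\<in>?PP. c p * c p' * ?E (\<lambda>z. w p z * w p' z)) = (\<Sum>p'\<in>{p, prod.swap p}. c p * c p')"
      using PP p swap[OF p] by (intro sum.mono_neutral_cong_right) (auto simp: Eww)
    also have "\<dots> = 2 * (c p)\<^sup>2"
      using swap[OF p] by (simp add: sym power2_eq_square)
    finally show "(\<Sum>p'\<in>?PP. c p * c p' * ?E (\<lambda>z. w p z * w p' z)) = 2 * (c p)\<^sup>2" .
  qed
  finally show ?thesis
    by (simp add: w_def sum_distrib_left)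
qed

lemma rademacher_quadratic_form_variance:
  fixes G :: "'a \<Rightarrow> 'a \<Rightarrow> real"
  assumes T: "finite T" and sym: "\<And>s t. G s t = G t s"
  shows "measure_pmf.expectation (rademacher_vec T)
           (\<lambda>z. ((\<Sum>s\<in>T. \<Sum>t\<in>T. G s t * z s * z t) - (\<Sum>s\<in>T. G s s))\<^sup>2)
         \<le> 2 * (\<Sum>s\<in>T. \<Sum>t\<in>T. (G s t)\<^sup>2)"
proof -
  let ?c = "\<lambda>p. G (fst p) (snd p)"
  have "measure_pmf.expectation (rademacher_vec T)
          (\<lambda>z. ((\<Sum>s\<in>T. \<Sum>t\<in>T. G s t * z s * z t) - (\<Sum>s\<in>T. G s s))\<^sup>2)
        = measure_pmf.expectation (rademacher_vec T)
          (\<lambda>z. (\<Sum>p\<in>off_diagonal T. ?c p * (z (fst p) * z (snd p)))\<^sup>2)"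
    by (intro integral_cong_AE AE_pmfI) (simp_all add: rademacher_quadratic_form_off_diagonal[OF T])
  also have "\<dots> = 2 * (\<Sum>s\<in>T. \<Sum>t\<in>T - {s}. (G s t)\<^sup>2)"
    using T by (subst expectation_rademacher_off_diagonal_square) (auto simp: sym sum_off_diagonal)
  also have "\<dots> \<le> 2 * (\<Sum>s\<in>T. \<Sum>t\<in>T. (G s t)\<^sup>2)"
    using T by (intro mult_left_mono sum_mono sum_mono2) auto
  finally show ?thesis .
qed

definition sum_sq_entries :: "nat \<Rightarrow> (nat \<Rightarrow> nat \<Rightarrow> real) \<Rightarrow> real" where
  "sum_sq_entries n D = (\<Sum>r<n. \<Sum>j<n. (D r j)\<^sup>2)"

text \<open>Here \<open>z\<close> encodes \<open>m\<close> sign vectors \<open>z\<^sub>l = z (l, _)\<close>, and \<open>sketch_sq_norm m n D z\<close> is the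
  average of \<open>\<parallel>D z\<^sub>l\<parallel>\<^sup>2\<close>, an unbiased estimate of \<open>sum_sq_entries n D\<close>.\<close>

definition sketch_sq_norm :: "nat \<Rightarrow> nat \<Rightarrow> (nat \<Rightarrow> nat \<Rightarrow> real) \<Rightarrow> (nat \<times> nat \<Rightarrow> real) \<Rightarrow> real" where
  "sketch_sq_norm m n D z = (\<Sum>l<m. \<Sum>r<n. (\<Sum>j<n. D r j * z (l, j))\<^sup>2) / m"

definition sketch_gram :: "nat \<Rightarrow> nat \<Rightarrow> (nat \<Rightarrow> nat \<Rightarrow> real) \<Rightarrow> nat \<times> nat \<Rightarrow> nat \<times> nat \<Rightarrow> real" where
  "sketch_gram m n D s t = (if fst s = fst t then (\<Sum>r<n. D r (snd s) * D r (snd t)) / m else 0)"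

lemma sum_block_diagonal:
  fixes m n :: nat
  assumes "\<And>l l' j j'. l \<noteq> l' \<Longrightarrow> f (l, j) (l', j') = 0"
  shows "(\<Sum>s\<in>{..<m} \<times> {..<n}. \<Sum>t\<in>{..<m} \<times> {..<n}. f s t)
         = (\<Sum>l<m. \<Sum>j<n. \<Sum>j'<n. f (l, j) (l, j'))"
proof -
  have "(\<Sum>l'<m. \<Sum>j'<n. f (l, j) (l', j')) = (\<Sum>j'<n. f (l, j) (l, j'))" if "l < m" for l j
  proof -
    have "(\<Sum>l'<m. \<Sum>j'<n. f (l, j) (l', j'))
          = (\<Sum>l'<m. if l' = l then (\<Sum>j'<n. f (l, j) (l, j')) else 0)"
      using assms by (intro sum.cong) auto
    also have "\<dots> = (\<Sum>j'<n. f (l, j) (l, j'))"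
      using that by (subst sum.delta) auto
    finally show ?thesis .
  qed
  then show ?thesis
    by (simp add: sum.cartesian_product')
qed

lemma sketch_sq_norm_eq_quadratic_form:
  "sketch_sq_norm m n D z
   = (\<Sum>s\<in>{..<m} \<times> {..<n}. \<Sum>t\<in>{..<m} \<times> {..<n}. sketch_gram m n D s t * z s * z t)"
proof -
  have row: "(\<Sum>r<n. (\<Sum>j<n. D r j * z (l, j))\<^sup>2)
        = (\<Sum>j<n. \<Sum>j'<n. (\<Sum>r<n. D r j * D r j') * z (l, j) * z (l, j'))" for l
  proof -
    have "(\<Sum>r<n. (\<Sum>j<n. D r j * z (l, j))\<^sup>2)
          = (\<Sum>r<n. \<Sum>j<n. \<Sum>j'<n. D r j * D r j' * z (l, j) * z (l, j'))"
      unfolding power2_eq_square sum_product by (simp add: algebra_simps)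
    also have "\<dots> = (\<Sum>j<n. \<Sum>j'<n. \<Sum>r<n. D r j * D r j' * z (l, j) * z (l, j'))"
      by (subst sum.swap) (rule sum.cong[OF refl], rule sum.swap)
    finally show ?thesis
      by (simp add: sum_distrib_right)
  qed
  have "sketch_sq_norm m n D z
        = (\<Sum>l<m. \<Sum>j<n. \<Sum>j'<n. (\<Sum>r<n. D r j * D r j') * z (l, j) * z (l, j')) / m"
    unfolding sketch_sq_norm_def row ..
  also have "\<dots> = (\<Sum>l<m. \<Sum>j<n. \<Sum>j'<n. (\<Sum>r<n. D r j * D r j') * z (l, j) * z (l, j') / m)"
    by (simp only: sum_divide_distrib)
  also have "\<dots> = (\<Sum>s\<in>{..<m} \<times> {..<n}. \<Sum>t\<in>{..<m} \<times> {..<n}. sketch_gram m n D s t * z s * z t)"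
    by (simp add: sum_block_diagonal sketch_gram_def)
  finally show ?thesis .
qed

lemma sum_sketch_gram_diagonal:
  assumes "m > 0"
  shows "(\<Sum>s\<in>{..<m} \<times> {..<n}. sketch_gram m n D s s) = sum_sq_entries n D"
proof -
  have "(\<Sum>s\<in>{..<m} \<times> {..<n}. sketch_gram m n D s s) = m * ((\<Sum>j<n. \<Sum>r<n. (D r j)\<^sup>2) / m)"
    by (simp add: sum.cartesian_product' sketch_gram_def power2_eq_square sum_divide_distrib)
  also have "\<dots> = (\<Sum>j<n. \<Sum>r<n. (D r j)\<^sup>2)"
    using assms by simp
  also have "\<dots> = sum_sq_entries n D"
    unfolding sum_sq_entries_def by (rule sum.swap)
  finally show ?thesis .
qed

lemma sum_sketch_gram_sq_le:
  assumes "m > 0"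
  shows "(\<Sum>s\<in>{..<m} \<times> {..<n}. \<Sum>t\<in>{..<m} \<times> {..<n}. (sketch_gram m n D s t)\<^sup>2)
         \<le> (sum_sq_entries n D)\<^sup>2 / m"
proof -
  define col_sq where "col_sq j = (\<Sum>r<n. (D r j)\<^sup>2)" for j
  have "(\<Sum>s\<in>{..<m} \<times> {..<n}. \<Sum>t\<in>{..<m} \<times> {..<n}. (sketch_gram m n D s t)\<^sup>2)
        = (\<Sum>l<m. \<Sum>j<n. \<Sum>j'<n. (\<Sum>r<n. D r j * D r j')\<^sup>2 / m\<^sup>2)"
    by (simp add: sum_block_diagonal sketch_gram_def power_divide)
  also have "\<dots> = m * ((\<Sum>j<n. \<Sum>j'<n. (\<Sum>r<n. D r j * D r j')\<^sup>2) / m\<^sup>2)"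
    by (simp add: sum_divide_distrib)
  also have "\<dots> = (\<Sum>j<n. \<Sum>j'<n. (\<Sum>r<n. D r j * D r j')\<^sup>2) / m"
    using assms by (simp add: power2_eq_square)
  also have "\<dots> \<le> (\<Sum>j<n. \<Sum>j'<n. col_sq j * col_sq j') / m"
    unfolding col_sq_def by (intro divide_right_mono sum_mono Cauchy_Schwarz_ineq_sum) simp
  also have "(\<Sum>j<n. \<Sum>j'<n. col_sq j * col_sq j') = (\<Sum>j<n. col_sq j)\<^sup>2"
    by (simp add: power2_eq_square sum_product)
  also have "(\<Sum>j<n. col_sq j) = sum_sq_entries n D"
    unfolding col_sq_def sum_sq_entries_def by (rule sum.swap)
  finally show ?thesis .
qed

definition sketch_fails :: "nat \<Rightarrow> nat \<Rightarrow> real \<Rightarrow> (nat \<Rightarrow> nat \<Rightarrow> real) \<Rightarrow> (nat \<times> nat \<Rightarrow> real) set" where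
  "sketch_fails m n \<eta> D = {z. \<bar>sketch_sq_norm m n D z - sum_sq_entries n D\<bar> > \<eta> * sum_sq_entries n D}"

lemma sketch_sq_norm_deviation:
  assumes m: "m > 0" and \<eta>: "\<eta> > 0"
  shows "measure_pmf.prob (rademacher_vec ({..<m} \<times> {..<n})) (sketch_fails m n \<eta> D)
         \<le> 2 / (m * \<eta>\<^sup>2)"
proof (cases "sum_sq_entries n D = 0")
  case True
  then have "D r j = 0" if "r < n" "j < n" for r j
    using that unfolding sum_sq_entries_def
    by (subst (asm) sum_nonneg_eq_0_iff) (auto simp: sum_nonneg_eq_0_iff sum_nonneg)
  then have "sketch_sq_norm m n D z = 0" for z
    by (simp add: sketch_sq_norm_def)
  with True show ?thesis by (simp add: sketch_fails_def)
next
  case False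
  let ?U = "{..<m} \<times> {..<n}" and ?Tr = "sum_sq_entries n D"
  let ?G = "sketch_gram m n D"
  have "?Tr \<ge> 0"
    by (simp add: sum_sq_entries_def sum_nonneg)
  with False have Tr: "?Tr > 0" by simp
  have "measure_pmf.expectation (rademacher_vec ?U) (\<lambda>z. (sketch_sq_norm m n D z - ?Tr)\<^sup>2)
        = measure_pmf.expectation (rademacher_vec ?U)
            (\<lambda>z. ((\<Sum>s\<in>?U. \<Sum>t\<in>?U. ?G s t * z s * z t) - (\<Sum>s\<in>?U. ?G s s))\<^sup>2)"
    by (simp only: sketch_sq_norm_eq_quadratic_form sum_sketch_gram_diagonal[OF m])
  also have "\<dots> \<le> 2 * (\<Sum>s\<in>?U. \<Sum>t\<in>?U. (?G s t)\<^sup>2)"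
    by (rule rademacher_quadratic_form_variance) (simp_all add: sketch_gram_def mult.commute)
  also have "\<dots> \<le> 2 * (?Tr\<^sup>2 / m)"
    using sum_sketch_gram_sq_le[OF m, of n D] by simp
  finally have variance:
    "measure_pmf.expectation (rademacher_vec ?U) (\<lambda>z. (sketch_sq_norm m n D z - ?Tr)\<^sup>2)
     \<le> 2 * (?Tr\<^sup>2 / m)" .
  have "measure_pmf.prob (rademacher_vec ?U) (sketch_fails m n \<eta> D)
        \<le> measure_pmf.prob (rademacher_vec ?U) {z. \<bar>sketch_sq_norm m n D z - ?Tr\<bar> \<ge> \<eta> * ?Tr}"
    by (intro measure_pmf.finite_measure_mono) (auto simp: sketch_fails_def)
  also have "\<dots> \<le> measure_pmf.expectation (rademacher_vec ?U) (\<lambda>z. (sketch_sq_norm m n D z - ?Tr)\<^sup>2)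
                  / (\<eta> * ?Tr)\<^sup>2"
    using measure_pmf.second_moment_method[of "\<lambda>z. sketch_sq_norm m n D z - ?Tr"] Tr \<eta>
    by (simp add: integrable_rademacher_vec)
  also have "\<dots> \<le> 2 * (?Tr\<^sup>2 / m) / (\<eta> * ?Tr)\<^sup>2"
    using variance by (rule divide_right_mono) simp
  also have "\<dots> = 2 / (m * \<eta>\<^sup>2)"
    using Tr \<eta> m by (simp add: field_simps power2_eq_square)
  finally show ?thesis .
qed

definition median :: "nat \<Rightarrow> (nat \<Rightarrow> real) \<Rightarrow> real" where
  "median g v = Min {v i | i. i < g \<and> g < 2 * card {j. j < g \<and> v j \<le> v i}}"

lemma median_between:
  assumes minority: "2 * card {i. i < g \<and> \<not> (a \<le> v i \<and> v i \<le> b)} < g"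
  shows "a \<le> median g v \<and> median g v \<le> b"
proof -
  define good where "good = {i. i < g \<and> a \<le> v i \<and> v i \<le> b}"
  define bad where "bad = {i. i < g \<and> \<not> (a \<le> v i \<and> v i \<le> b)}"
  define S where "S = {v i | i. i < g \<and> g < 2 * card {j. j < g \<and> v j \<le> v i}}"
  have "finite S"
    unfolding S_def by simp
  have "good \<union> bad = {..<g}" "good \<inter> bad = {}"
    by (auto simp: good_def bad_def)
  then have "card good + card bad = g"
    using card_Un_disjoint[of good bad] by (auto simp: good_def bad_def)
  then have good_majority: "g < 2 * card good"
    using minority unfolding bad_def by linarith
  then have "good \<noteq> {}" by auto
  moreover have "finite good"
    by (simp add: good_def)
  ultimately obtain k where k: "k \<in> good" "\<And>i. i \<in> good \<Longrightarrow> v i \<le> v k"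
    using Max_in[of "v ` good"] Max_ge[of "v ` good"] by fastforce
  have "card good \<le> card {j. j < g \<and> v j \<le> v k}"
    using k by (intro card_mono) (auto simp: good_def)
  then have "v k \<in> S"
    using good_majority k(1) unfolding S_def good_def by fastforce
  then have upper: "median g v \<le> b"
    unfolding median_def S_def[symmetric] using Min_le[OF \<open>finite S\<close>] k(1) good_def by fastforce
  have "Min S \<in> S"
    using Min_in[OF \<open>finite S\<close>] \<open>v k \<in> S\<close> by auto
  then obtain i where i: "Min S = v i" "g < 2 * card {j. j < g \<and> v j \<le> v i}"
    unfolding S_def by blast
  have "a \<le> v i"
  proof (rule ccontr)
    assume "\<not> a \<le> v i"
    then have "card {j. j < g \<and> v j \<le> v i} \<le> card bad"
      by (intro card_mono) (auto simp: bad_def)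
    then show False
      using i(2) minority unfolding bad_def by linarith
  qed
  with upper i(1) show ?thesis
    unfolding median_def S_def[symmetric] by simp
qed

lemma prob_Pi_pmf_all_in:
  fixes g :: nat
  assumes "T \<subseteq> {..<g}"
  shows "measure_pmf.prob (Pi_pmf {..<g} d (\<lambda>_. p)) {W. \<forall>i\<in>T. W i \<in> E}
         = measure_pmf.prob p E ^ card T"
proof -
  have "{W. \<forall>i\<in>T. W i \<in> E} = Pi {..<g} (\<lambda>i. if i \<in> T then E else UNIV)"
    using assms by (auto simp: Pi_def)
  then have "measure_pmf.prob (Pi_pmf {..<g} d (\<lambda>_. p)) {W. \<forall>i\<in>T. W i \<in> E}
             = (\<Prod>i<g. measure_pmf.prob p (if i \<in> T then E else UNIV))"
    by (simp add: measure_Pi_pmf_Pi)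
  also have "\<dots> = (\<Prod>i<g. if i \<in> T then measure_pmf.prob p E else 1)"
    by (intro prod.cong) auto
  also have "\<dots> = measure_pmf.prob p E ^ card T"
  proof -
    have "{..<g} \<inter> {i. i \<in> T} = T"
      using assms by auto
    then show ?thesis
      by (simp add: prod.If_cases)
  qed
  finally show ?thesis .
qed

text \<open>Union bound over the at most \<open>2\<^sup>g\<close> index sets of size \<open>\<ge> g/2\<close>, on each of which all
  trials fail with probability at most \<open>(1/16)\<^sup>g\<^sup>/\<^sup>2\<close>.\<close>

lemma prob_half_in_le:
  assumes pE: "measure_pmf.prob p E \<le> 1/16"
  shows "measure_pmf.prob (Pi_pmf {..<g} d (\<lambda>_. p)) {W. g \<le> 2 * card {i. i < g \<and> W i \<in> E}}
         \<le> (1/2)^g"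
proof -
  let ?P = "Pi_pmf {..<g} d (\<lambda>_. p)"
  define TT where "TT = {T. T \<subseteq> {..<g} \<and> g \<le> 2 * card T}"
  have "TT \<subseteq> Pow {..<g}"
    by (auto simp: TT_def)
  then have TT: "finite TT" "card TT \<le> 2^g"
    using card_mono[of "Pow {..<g}" TT] by (auto simp: card_Pow finite_subset)
  have each: "measure_pmf.prob ?P {W. \<forall>i\<in>T. W i \<in> E} \<le> (1/4)^g" if "T \<in> TT" for T
  proof -
    have "measure_pmf.prob ?P {W. \<forall>i\<in>T. W i \<in> E} \<le> (1/16) ^ card T"
      using that pE by (simp add: prob_Pi_pmf_all_in TT_def power_mono)
    also have "(1/16::real) ^ card T = (1/4) ^ (2 * card T)"
      by (simp add: power_mult power2_eq_square)
    also have "\<dots> \<le> (1/4) ^ g"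
      using that by (intro power_decreasing) (auto simp: TT_def)
    finally show ?thesis .
  qed
  have "{W. g \<le> 2 * card {i. i < g \<and> W i \<in> E}} \<subseteq> (\<Union>T\<in>TT. {W. \<forall>i\<in>T. W i \<in> E})"
  proof
    fix W assume "W \<in> {W. g \<le> 2 * card {i. i < g \<and> W i \<in> E}}"
    then have "{i. i < g \<and> W i \<in> E} \<in> TT"
      by (auto simp: TT_def)
    then show "W \<in> (\<Union>T\<in>TT. {W. \<forall>i\<in>T. W i \<in> E})"
      by blast
  qed
  then have "measure_pmf.prob ?P {W. g \<le> 2 * card {i. i < g \<and> W i \<in> E}}
             \<le> measure_pmf.prob ?P (\<Union>T\<in>TT. {W. \<forall>i\<in>T. W i \<in> E})"
    by (intro measure_pmf.finite_measure_mono) auto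
  also have "\<dots> \<le> (\<Sum>T\<in>TT. measure_pmf.prob ?P {W. \<forall>i\<in>T. W i \<in> E})"
    by (rule measure_pmf.finite_measure_subadditive_finite[OF TT(1)]) auto
  also have "\<dots> \<le> card TT * (1/4)^g"
    using sum_mono[OF each] by simp
  also have "\<dots> \<le> 2^g * (1/4)^g"
    using TT(2) by (intro mult_right_mono) (auto simp flip: of_nat_le_iff)
  also have "(2::real)^g * (1/4)^g = (1/2)^g"
    by (simp add: power_mult_distrib[symmetric])
  finally show ?thesis .
qed

lemma prob_all_majorities:
  assumes "finite F" and pE: "\<And>B. B \<in> F \<Longrightarrow> measure_pmf.prob p (E B) \<le> 1/16"
  shows "measure_pmf.prob (Pi_pmf {..<g} d (\<lambda>_. p)) {W. \<forall>B\<in>F. 2 * card {i. i < g \<and> W i \<in> E B} < g}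
         \<ge> 1 - card F * (1/2)^g"
proof -
  let ?P = "Pi_pmf {..<g} d (\<lambda>_. p)"
  let ?Good = "{W. \<forall>B\<in>F. 2 * card {i. i < g \<and> W i \<in> E B} < g}"
  have "measure_pmf.prob ?P (UNIV - ?Good)
        \<le> measure_pmf.prob ?P (\<Union>B\<in>F. {W. g \<le> 2 * card {i. i < g \<and> W i \<in> E B}})"
    by (intro measure_pmf.finite_measure_mono) auto
  also have "\<dots> \<le> (\<Sum>B\<in>F. measure_pmf.prob ?P {W. g \<le> 2 * card {i. i < g \<and> W i \<in> E B}})"
    by (rule measure_pmf.finite_measure_subadditive_finite[OF \<open>finite F\<close>]) auto
  also have "\<dots> \<le> (\<Sum>B\<in>F. (1/2)^g)"
    by (intro sum_mono prob_half_in_le pE)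
  finally show ?thesis
    using measure_pmf.prob_compl[of ?Good ?P] by simp
qed

lemma length_answers: "length (answers Q A \<omega> k) = k"
  by (induction k) (auto simp: Let_def)

lemma nth_answers_nonadaptive:
  "i < k \<Longrightarrow> answers (\<lambda>\<omega> as. x \<omega> (length as)) A \<omega> k ! i = A *\<^sub>v x \<omega> i"
  by (induction k) (auto simp: Let_def nth_append length_answers less_Suc_eq)

lemma mult_mat_vec_diff_nth:
  fixes A B :: "real mat"
  assumes "A \<in> carrier_mat n n" "B \<in> carrier_mat n n" "v \<in> carrier_vec n" "r < n"
  shows "(A *\<^sub>v v) $ r - (B *\<^sub>v v) $ r = (\<Sum>j<n. (A $$ (r, j) - B $$ (r, j)) * v $ j)"
  using assms by (simp add: scalar_prod_def atLeast0LessThan sum_subtractf[symmetric] algebra_simps)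

lemma frob_norm_diff:
  fixes A B :: "real mat"
  assumes "A \<in> carrier_mat n n" "B \<in> carrier_mat n n"
  shows "frob_norm (A - B) = sqrt (sum_sq_entries n (\<lambda>r j. A $$ (r, j) - B $$ (r, j)))"
  using assms by (simp add: frob_norm_def sum_sq_entries_def)

text \<open>The seed \<open>seed_of m n W\<close>
  stores the \<open>l\<close>-th sign vector \<open>W i (l, _)\<close> of the \<open>i\<close>-th group in block \<open>k = i * m + l\<close>.\<close>

definition query :: "nat \<Rightarrow> seed \<Rightarrow> nat \<Rightarrow> real vec" where
  "query n \<omega> k = vec n (\<lambda>j. \<omega> (k * n + j))"

definition seed_of :: "nat \<Rightarrow> nat \<Rightarrow> (nat \<Rightarrow> nat \<times> nat \<Rightarrow> real) \<Rightarrow> seed" where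
  "seed_of m n W t = W (t div n div m) (t div n mod m, t mod n)"

lemma query_carrier_vec [simp]: "query n \<omega> k \<in> carrier_vec n"
  by (simp add: query_def)

lemma query_seed_of:
  assumes "l < m" "j < n"
  shows "query n (seed_of m n W) (i * m + l) $ j = W i (l, j)"
  using assms by (simp add: query_def seed_of_def)

definition residual_estimate :: "nat \<Rightarrow> nat \<Rightarrow> seed \<Rightarrow> real vec list \<Rightarrow> real mat \<Rightarrow> nat \<Rightarrow> real" where
  "residual_estimate m n \<omega> as B i =
     (\<Sum>l<m. \<Sum>r<n. ((as ! (i * m + l)) $ r - (B *\<^sub>v query n \<omega> (i * m + l)) $ r)\<^sup>2) / m"

definition sketch_select :: "real mat set \<Rightarrow> nat \<Rightarrow> nat \<Rightarrow> nat \<Rightarrow> seed \<Rightarrow> real vec list \<Rightarrow> real mat" where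
  "sketch_select F m g n \<omega> as = arg_min_on (\<lambda>B. median g (residual_estimate m n \<omega> as B)) F"

definition sketch_seeds :: "nat \<Rightarrow> nat \<Rightarrow> nat \<Rightarrow> seed pmf" where
  "sketch_seeds m n g = map_pmf (seed_of m n) (Pi_pmf {..<g} (\<lambda>_. 0) (\<lambda>_. rademacher_vec ({..<m} \<times> {..<n})))"

lemma residual_estimate_seed_of:
  assumes A: "A \<in> carrier_mat n n" and B: "B \<in> carrier_mat n n" and i: "i < g"
  shows "residual_estimate m n (seed_of m n W)
           (answers (\<lambda>\<omega> as. query n \<omega> (length as)) A (seed_of m n W) (g * m)) B i
         = sketch_sq_norm m n (\<lambda>r j. A $$ (r, j) - B $$ (r, j)) (W i)"
proof -
  define \<omega> where "\<omega> = seed_of m n W"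
  have "(answers (\<lambda>\<omega> as. query n \<omega> (length as)) A \<omega> (g * m) ! (i * m + l)) $ r
          - (B *\<^sub>v query n \<omega> (i * m + l)) $ r
        = (\<Sum>j<n. (A $$ (r, j) - B $$ (r, j)) * W i (l, j))" if "l < m" "r < n" for l r
  proof -
    have "i * m + l < (i + 1) * m"
      using that by simp
    also have "\<dots> \<le> g * m"
      using i by (intro mult_right_mono) auto
    finally have "i * m + l < g * m" .
    then show ?thesis
      using that mult_mat_vec_diff_nth[OF A B, of "query n \<omega> (i * m + l)" r]
      by (simp add: nth_answers_nonadaptive query_seed_of \<omega>_def)
  qed
  then show ?thesis
    by (simp add: residual_estimate_def sketch_sq_norm_def \<omega>_def)
qed

lemma arg_min_on_near_min:
  fixes \<phi> f :: "'a \<Rightarrow> real"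
  assumes F: "finite F" "B \<in> F" and \<epsilon>: "0 < \<epsilon>" "\<epsilon> < 1" and "0 \<le> \<phi> B"
    and approx: "\<And>B'. B' \<in> F \<Longrightarrow> (1 - \<epsilon>/2) * \<phi> B' \<le> f B' \<and> f B' \<le> (1 + \<epsilon>/2) * \<phi> B'"
  shows "\<phi> (arg_min_on f F) \<le> (1 + \<epsilon>)\<^sup>2 * \<phi> B"
proof -
  let ?B = "arg_min_on f F"
  have "?B \<in> F"
    using F by (intro arg_min_if_finite(1)) auto
  then have "(1 - \<epsilon>/2) * \<phi> ?B \<le> f ?B"
    using approx by blast
  also have "f ?B \<le> f B"
    using F by (intro arg_min_least) auto
  also have "f B \<le> (1 + \<epsilon>/2) * \<phi> B"
    using approx F by blast
  also have "\<dots> \<le> (1 - \<epsilon>/2) * ((1 + \<epsilon>)\<^sup>2 * \<phi> B)"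
  proof -
    have "\<epsilon> * \<epsilon> * \<epsilon> \<le> \<epsilon>"
      using \<epsilon> by (simp add: mult_le_one mult_right_le_one_le)
    then have "1 + \<epsilon>/2 \<le> (1 - \<epsilon>/2) * (1 + \<epsilon>)\<^sup>2"
      using \<epsilon> by (simp add: power2_eq_square algebra_simps)
    then show ?thesis
      using \<open>0 \<le> \<phi> B\<close> by (metis mult.assoc mult_right_mono)
  qed
  finally show ?thesis
    using \<epsilon> by simp
qed

definition near_best :: "real mat set \<Rightarrow> real \<Rightarrow> real mat \<Rightarrow> real mat \<Rightarrow> bool" where
  "near_best F \<epsilon> A B \<longleftrightarrow> B \<in> F \<and> frob_norm (A - B) \<le> (1 + \<epsilon>) * Min ((\<lambda>B'. frob_norm (A - B')) ` F)"

lemma near_best_sketch_select: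
  assumes A: "A \<in> carrier_mat n n" and F: "finite F" "F \<noteq> {}" "F \<subseteq> carrier_mat n n"
    and \<epsilon>: "0 < \<epsilon>" "\<epsilon> < 1"
    and majority: "\<forall>B\<in>F. 2 * card {i. i < g \<and> W i \<in> sketch_fails m n (\<epsilon>/2) (\<lambda>r j. A $$ (r, j) - B $$ (r, j))} < g"
  defines "\<omega> \<equiv> seed_of m n W"
  shows "near_best F \<epsilon> A (sketch_select F m g n \<omega> (answers (\<lambda>\<omega> as. query n \<omega> (length as)) A \<omega> (g * m)))"
proof -
  have deviation_iff: "\<not> ((1 - \<eta>) * t \<le> x \<and> x \<le> (1 + \<eta>) * t) \<longleftrightarrow> \<eta> * t < \<bar>x - t\<bar>" for \<eta> t x :: real
    by (auto simp: left_diff_distrib distrib_right abs_if)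
  define as where "as = answers (\<lambda>\<omega> as. query n \<omega> (length as)) A \<omega> (g * m)"
  define Tr where "Tr B = sum_sq_entries n (\<lambda>r j. A $$ (r, j) - B $$ (r, j))" for B
  define est where "est B = median g (residual_estimate m n \<omega> as B)" for B
  have est: "(1 - \<epsilon>/2) * Tr B \<le> est B \<and> est B \<le> (1 + \<epsilon>/2) * Tr B" if "B \<in> F" for B
    unfolding est_def
  proof (rule median_between)
    have Bc: "B \<in> carrier_mat n n"
      using that F(3) by auto
    have "{i. i < g \<and> \<not> ((1 - \<epsilon>/2) * Tr B \<le> residual_estimate m n \<omega> as B i
                         \<and> residual_estimate m n \<omega> as B i \<le> (1 + \<epsilon>/2) * Tr B)}
          = {i. i < g \<and> W i \<in> sketch_fails m n (\<epsilon>/2) (\<lambda>r j. A $$ (r, j) - B $$ (r, j))}"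
    proof (intro Collect_cong conj_cong refl)
      fix i assume "i < g"
      then have "residual_estimate m n \<omega> as B i = sketch_sq_norm m n (\<lambda>r j. A $$ (r, j) - B $$ (r, j)) (W i)"
        unfolding as_def \<omega>_def by (rule residual_estimate_seed_of[OF A Bc])
      then show "\<not> ((1 - \<epsilon>/2) * Tr B \<le> residual_estimate m n \<omega> as B i
                   \<and> residual_estimate m n \<omega> as B i \<le> (1 + \<epsilon>/2) * Tr B)
                 \<longleftrightarrow> W i \<in> sketch_fails m n (\<epsilon>/2) (\<lambda>r j. A $$ (r, j) - B $$ (r, j))"
        unfolding sketch_fails_def mem_Collect_eq Tr_def by (simp only: deviation_iff)
    qed
    with majority that
    show "2 * card {i. i < g \<and> \<not> ((1 - \<epsilon>/2) * Tr B \<le> residual_estimate m n \<omega> as B i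
                                  \<and> residual_estimate m n \<omega> as B i \<le> (1 + \<epsilon>/2) * Tr B)} < g"
      by simp
  qed
  have "Min ((\<lambda>B. frob_norm (A - B)) ` F) \<in> (\<lambda>B. frob_norm (A - B)) ` F"
    using F by simp
  then obtain B where B: "B \<in> F" "Min ((\<lambda>B. frob_norm (A - B)) ` F) = frob_norm (A - B)"
    by auto
  let ?Bt = "sketch_select F m g n \<omega> as"
  have Bt: "?Bt \<in> F"
    unfolding sketch_select_def using F by (intro arg_min_if_finite(1))
  have "Tr ?Bt \<le> (1 + \<epsilon>)\<^sup>2 * Tr B"
    unfolding sketch_select_def est_def[symmetric]
    using F B(1) \<epsilon> est by (intro arg_min_on_near_min) (auto simp: Tr_def sum_sq_entries_def sum_nonneg)
  then have "sqrt (Tr ?Bt) \<le> sqrt ((1 + \<epsilon>)\<^sup>2 * Tr B)"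
    by (rule real_sqrt_le_mono)
  also have "\<dots> = (1 + \<epsilon>) * sqrt (Tr B)"
    using \<epsilon> by (simp add: real_sqrt_mult)
  finally have "sqrt (Tr ?Bt) \<le> (1 + \<epsilon>) * sqrt (Tr B)" .
  then show ?thesis
    using Bt B F(3) frob_norm_diff[OF A]
    by (auto simp: near_best_def Tr_def as_def subset_iff)
qed

definition selects_near_best ::
  "nat \<Rightarrow> real mat set \<Rightarrow> real \<Rightarrow> real \<Rightarrow> seed measure \<Rightarrow> nat \<Rightarrow>
   (seed \<Rightarrow> real vec list \<Rightarrow> real vec) \<Rightarrow> (seed \<Rightarrow> real vec list \<Rightarrow> real mat) \<Rightarrow> bool" where
  "selects_near_best n F \<epsilon> \<delta> M q Q out \<longleftrightarrow>
     prob_space M \<and> (\<forall>\<omega> as. Q \<omega> as \<in> carrier_vec n) \<and>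
     (\<forall>A \<in> carrier_mat n n.
        let S = {\<omega> \<in> space M. near_best F \<epsilon> A (out \<omega> (answers Q A \<omega> q))}
        in S \<in> sets M \<and> measure M S > 1 - \<delta>)"

lemma selects_near_best_singleton:
  assumes "0 < \<epsilon>" "0 < \<delta>"
  shows "selects_near_best n {B} \<epsilon> \<delta> (measure_pmf (return_pmf (\<lambda>_. 0))) 0 (\<lambda>_ _. 0\<^sub>v n) (\<lambda>_ _. B)"
proof -
  have "near_best {B} \<epsilon> A B" for A
  proof -
    have "0 \<le> frob_norm (A - B)"
      by (simp add: frob_norm_def sum_nonneg)
    then show ?thesis
      using assms by (simp add: near_best_def mult_right_mono[of 1 "1 + \<epsilon>", simplified])
  qed
  then show ?thesis
    using assms by (simp add: selects_near_best_def measure_pmf.prob_space_axioms)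
qed

lemma selects_near_best_sketch:
  assumes F: "finite F" "F \<noteq> {}" "F \<subseteq> carrier_mat n n" and \<epsilon>: "0 < \<epsilon>" "\<epsilon> < 1"
    and m: "0 < m" "32 \<le> m * (\<epsilon>/2)\<^sup>2" and g: "card F * (1/2)^g < \<delta>"
  shows "selects_near_best n F \<epsilon> \<delta> (measure_pmf (sketch_seeds m n g)) (g * m)
           (\<lambda>\<omega> as. query n \<omega> (length as)) (sketch_select F m g n)"
  unfolding selects_near_best_def Let_def
proof (intro conjI ballI allI)
  fix A :: "real mat" assume A: "A \<in> carrier_mat n n"
  let ?P = "Pi_pmf {..<g} (\<lambda>_. 0) (\<lambda>_. rademacher_vec ({..<m} \<times> {..<n}))"
  let ?fails = "\<lambda>B. sketch_fails m n (\<epsilon>/2) (\<lambda>r j. A $$ (r, j) - B $$ (r, j))"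
  let ?Good = "{W. \<forall>B\<in>F. 2 * card {i. i < g \<and> W i \<in> ?fails B} < g}"
  let ?ok = "\<lambda>\<omega>. near_best F \<epsilon> A (sketch_select F m g n \<omega>
                 (answers (\<lambda>\<omega> as. query n \<omega> (length as)) A \<omega> (g * m)))"
  have "measure_pmf.prob (rademacher_vec ({..<m} \<times> {..<n})) (?fails B) \<le> 1/16" for B
  proof -
    have "measure_pmf.prob (rademacher_vec ({..<m} \<times> {..<n})) (?fails B) \<le> 2 / (m * (\<epsilon>/2)\<^sup>2)"
      using m \<epsilon> by (intro sketch_sq_norm_deviation) auto
    also have "\<dots> \<le> 2 / 32"
      using m by (intro divide_left_mono) auto
    finally show ?thesis by simp
  qed
  then have "1 - \<delta> < measure_pmf.prob ?P ?Good"
    using prob_all_majorities[OF F(1), of _ ?fails g "\<lambda>_. 0"] g by fastforce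
  also have "\<dots> \<le> measure_pmf.prob ?P (seed_of m n -` Collect ?ok)"
    using A F \<epsilon> near_best_sketch_select[of A n F \<epsilon> g]
    by (intro measure_pmf.finite_measure_mono) auto
  finally show "measure (measure_pmf (sketch_seeds m n g))
                  {\<omega> \<in> space (measure_pmf (sketch_seeds m n g)). ?ok \<omega>} > 1 - \<delta>"
    by (simp add: sketch_seeds_def)
qed (simp_all add: measure_pmf.prob_space_axioms)

lemma sketch_size_bounds:
  fixes \<epsilon> :: real
  assumes \<epsilon>: "0 < \<epsilon>" "\<epsilon> < 1"
  defines "m \<equiv> nat \<lceil>128 / \<epsilon>\<^sup>2\<rceil>"
  shows "0 < m" "32 \<le> m * (\<epsilon>/2)\<^sup>2" "m \<le> 129 / \<epsilon>\<^sup>2"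
proof -
  have \<epsilon>2: "0 < \<epsilon>\<^sup>2" "\<epsilon>\<^sup>2 < 1"
    using \<epsilon> by (auto simp: power_less_one_iff)
  then have m_eq: "real m = \<lceil>128 / \<epsilon>\<^sup>2\<rceil>"
    unfolding m_def by simp
  then have lower: "128 / \<epsilon>\<^sup>2 \<le> m"
    by linarith
  then show "0 < m"
    using \<epsilon>2 by (metis divide_pos_pos of_nat_0_less_iff order_less_le_trans zero_less_numeral)
  show "32 \<le> m * (\<epsilon>/2)\<^sup>2"
    using lower \<epsilon>2 by (simp add: field_simps power_divide)
  have "1 \<le> 1 / \<epsilon>\<^sup>2"
    using \<epsilon>2 by simp
  then show "m \<le> 129 / \<epsilon>\<^sup>2"
    using m_eq by linarith
qed

lemma repetitions_bounds:
  fixes L :: real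
  assumes L: "ln 2 \<le> L"
  defines "g \<equiv> nat \<lfloor>2 * L\<rfloor> + 1"
  shows "exp L * (1/2)^g < 1" "g \<le> 4 * L"
proof -
  have "2/3 \<le> L"
    using L ln2_ge_two_thirds by linarith
  have g_eq: "real g = \<lfloor>2 * L\<rfloor> + 1"
    unfolding g_def using \<open>2/3 \<le> L\<close> by simp
  then show "g \<le> 4 * L"
    using \<open>2/3 \<le> L\<close> by linarith
  have "L * 1 \<le> L * (2 * ln 2)"
    using \<open>2/3 \<le> L\<close> ln2_ge_two_thirds by (intro mult_left_mono) auto
  then have "L \<le> 2 * L * ln 2"
    by simp
  also have "\<dots> < g * ln 2"
    using g_eq by (intro mult_strict_right_mono) auto
  finally have "exp L < exp (g * ln 2)"
    by simp
  also have "\<dots> = 2^g"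
    by (simp add: exp_of_nat_mult)
  finally have "exp L < 2^g" .
  then show "exp L * (1/2)^g < 1"
    by (simp add: field_simps)
qed

lemma selects_near_best_few_queries:
  assumes F: "finite F" "2 \<le> card F" "F \<subseteq> carrier_mat n n"
    and \<epsilon>: "0 < \<epsilon>" "\<epsilon> < 1" and \<delta>: "0 < \<delta>" "\<delta> < 1"
  shows "\<exists>M q Q out. real q \<le> 1000 * ln (card F / \<delta>) / \<epsilon>\<^sup>2 \<and> selects_near_best n F \<epsilon> \<delta> M q Q out"
proof -
  define L where "L = ln (card F / \<delta>)"
  define m where "m = nat \<lceil>128 / \<epsilon>\<^sup>2\<rceil>"
  define g where "g = nat \<lfloor>2 * L\<rfloor> + 1"
  have "2 < card F / \<delta>"
    using F(2) \<delta> by (simp add: less_divide_eq)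
  then have L: "ln 2 \<le> L" and exp_L: "exp L = card F / \<delta>"
    unfolding L_def by simp_all
  have "0 < L"
    using L ln2_ge_two_thirds by linarith
  have "card F * (1/2)^g = \<delta> * (exp L * (1/2)^g)"
    using \<delta> exp_L by simp
  also have "\<dots> < \<delta>"
    using repetitions_bounds(1)[OF L] \<delta> unfolding g_def by simp
  finally have "card F * (1/2)^g < \<delta>" .
  then have "selects_near_best n F \<epsilon> \<delta> (measure_pmf (sketch_seeds m n g)) (g * m)
               (\<lambda>\<omega> as. query n \<omega> (length as)) (sketch_select F m g n)"
    using F \<epsilon> sketch_size_bounds[OF \<epsilon>] unfolding m_def by (intro selects_near_best_sketch) auto
  moreover have "real (g * m) \<le> (4 * L) * (129 / \<epsilon>\<^sup>2)"
  proof -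
    have "real g \<le> 4 * L" "real m \<le> 129 / \<epsilon>\<^sup>2"
      unfolding g_def m_def by (fact repetitions_bounds(2)[OF L] sketch_size_bounds(3)[OF \<epsilon>])+
    then show ?thesis
      using \<open>0 < L\<close> unfolding of_nat_mult by (intro mult_mono) auto
  qed
  moreover have "(4 * L) * (129 / \<epsilon>\<^sup>2) \<le> 1000 * L / \<epsilon>\<^sup>2"
    using \<open>0 < L\<close> \<epsilon> by (simp add: field_simps)
  ultimately show ?thesis
    unfolding L_def by (blast intro: order_trans)
qed

lemma selects_near_best_exists:
  assumes F: "finite F" "F \<noteq> {}" "F \<subseteq> carrier_mat n n"
    and \<epsilon>: "0 < \<epsilon>" "\<epsilon> < 1" and \<delta>: "0 < \<delta>" "\<delta> < 1"
  shows "\<exists>M q Q out. real q \<le> 1000 * ln (card F / \<delta>) / \<epsilon>\<^sup>2 \<and> selects_near_best n F \<epsilon> \<delta> M q Q out"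
proof (cases "2 \<le> card F")
  case True
  with assms show ?thesis
    by (intro selects_near_best_few_queries)
next
  case False
  have "0 < card F"
    using F by (simp add: card_gt_0_iff)
  with False have "card F = 1"
    by linarith
  then obtain B where "F = {B}"
    by (rule card_1_singletonE)
  moreover have "0 \<le> 1000 * ln (card F / \<delta>) / \<epsilon>\<^sup>2"
    using \<delta> \<open>F = {B}\<close> by simp
  ultimately show ?thesis
    using \<epsilon> \<delta> selects_near_best_singleton[of \<epsilon> \<delta> n B] by (metis of_nat_0)
qed

theorem claim2p1:
  shows "\<exists>C>0. \<forall>n (F :: real mat set) (\<epsilon>::real) (\<delta>::real).
     finite F \<and> F \<noteq> {} \<and> F \<subseteq> carrier_mat n n \<and> 0 < \<epsilon> \<and> \<epsilon> < 1 \<and> 0 < \<delta> \<and> \<delta> < 1 \<longrightarrow>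
     (\<exists>(M :: seed measure) (q::nat) (Q :: seed \<Rightarrow> real vec list \<Rightarrow> real vec)
        (out :: seed \<Rightarrow> real vec list \<Rightarrow> real mat).
        prob_space M \<and>
        real q \<le> C * ln (real (card F) / \<delta>) / \<epsilon>\<^sup>2 \<and>
        (\<forall>\<omega> as. Q \<omega> as \<in> carrier_vec n) \<and>
        (\<forall>A \<in> carrier_mat n n.
           let S = {\<omega> \<in> space M. out \<omega> (answers Q A \<omega> q) \<in> F \<and>
                     frob_norm (A - out \<omega> (answers Q A \<omega> q))
                       \<le> (1 + \<epsilon>) * Min ((\<lambda>B. frob_norm (A - B)) ` F)}
           in S \<in> sets M \<and> measure M S > 1 - \<delta>))"
proof (intro exI[of _ "1000::real"] conjI allI impI)
  fix n and F :: "real mat set" and \<epsilon> \<delta> :: real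
  assume "finite F \<and> F \<noteq> {} \<and> F \<subseteq> carrier_mat n n \<and> 0 < \<epsilon> \<and> \<epsilon> < 1 \<and> 0 < \<delta> \<and> \<delta> < 1"
  then obtain M q Q out where "real q \<le> 1000 * ln (card F / \<delta>) / \<epsilon>\<^sup>2" "selects_near_best n F \<epsilon> \<delta> M q Q out"
    using selects_near_best_exists[of F n \<epsilon> \<delta>] by (elim conjE) blast
  then show "\<exists>M q Q out. prob_space M \<and> real q \<le> 1000 * ln (card F / \<delta>) / \<epsilon>\<^sup>2 \<and>
               (\<forall>\<omega> as. Q \<omega> as \<in> carrier_vec n) \<and>
               (\<forall>A \<in> carrier_mat n n.
                  let S = {\<omega> \<in> space M. out \<omega> (answers Q A \<omega> q) \<in> F \<and>
                            frob_norm (A - out \<omega> (answers Q A \<omega> q))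
                              \<le> (1 + \<epsilon>) * Min ((\<lambda>B. frob_norm (A - B)) ` F)}
                  in S \<in> sets M \<and> measure M S > 1 - \<delta>)"
    unfolding selects_near_best_def near_best_def
    by (intro exI[of _ M] exI[of _ q] exI[of _ Q] exI[of _ out]) simp
qed simp

end
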